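(* Let $k$ be an algebraically closed field of characteristic zero, $\mathfrak g$ a nonzero finite-dimensional nilpotent Lie algebra over $k$, and $(A,\cdot)$ an LR-structure on $\mathfrak g$ such that the commuting family $\{L(x):x\in A\}$ has a single weight $\alpha$ on $A$ and $\alpha\ne 0$. Then $A$ contains an element $a\neq 0$ with $a\cdot a=a$.
   Context: An LR-algebra is a vector space $A$ with a bilinear product $\cdot$ satisfying $x\cdot(y\cdot z)=y\cdot(x\cdot z)$ and $(x\cdot y)\cdot z=(x\cdot z)\cdot y$ for all $x,y,z\in A$. An LR-structure on a Lie algebra $\mathfrak g$ is an LR-algebra product on the underlying vector space of $\mathfrak g$ with $x\cdot y-y\cdot x=[x,y]$. $L(x)y=x\cdot y$. "Single weight $\alpha$" means that for every $x$, $L(x)$ has only the eigenvalue $\alpha(L(x))$, where $\alpha$ is a linear form on the span of the $L(x)$. *)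

theory Defs
  imports "HOL-Computational_Algebra.Polynomial"
begin

(* The finite-dimensional vector space A over k is modelled as k^n, i.e. functions
   'n \<Rightarrow> 'k with 'n a finite (nonempty) index type; vector operations are pointwise. *)

definition klinear :: "(('n \<Rightarrow> 'k::field) \<Rightarrow> ('m \<Rightarrow> 'k)) \<Rightarrow> bool" where
  "klinear f \<longleftrightarrow>
     (\<forall>u v. f (\<lambda>i. u i + v i) = (\<lambda>j. f u j + f v j)) \<and>
     (\<forall>c u. f (\<lambda>i. c * u i) = (\<lambda>j. c * f u j))"

definition bilinear_prod :: "(('n \<Rightarrow> 'k::field) \<Rightarrow> ('n \<Rightarrow> 'k) \<Rightarrow> ('n \<Rightarrow> 'k)) \<Rightarrow> bool" where
  "bilinear_prod P \<longleftrightarrow> (\<forall>x. klinear (P x)) \<and> (\<forall>y. klinear (\<lambda>x. P x y))"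

definition LR_algebra :: "(('n \<Rightarrow> 'k::field) \<Rightarrow> ('n \<Rightarrow> 'k) \<Rightarrow> ('n \<Rightarrow> 'k)) \<Rightarrow> bool" where
  "LR_algebra P \<longleftrightarrow> bilinear_prod P \<and>
     (\<forall>x y z. P x (P y z) = P y (P x z)) \<and>
     (\<forall>x y z. P (P x y) z = P (P x z) y)"

(* the Lie bracket of the LR-structure: [x,y] = x.y - y.x *)
definition commutator :: "(('n \<Rightarrow> 'k::field) \<Rightarrow> ('n \<Rightarrow> 'k) \<Rightarrow> ('n \<Rightarrow> 'k)) \<Rightarrow>
    ('n \<Rightarrow> 'k) \<Rightarrow> ('n \<Rightarrow> 'k) \<Rightarrow> ('n \<Rightarrow> 'k)" where
  "commutator P x y = (\<lambda>i. P x y i - P y x i)"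

(* nilpotent Lie algebra: some term of the lower central series vanishes, i.e. all
   iterated brackets [x1,[x2,...,[xm,y]...]] of a fixed length m are zero *)
definition nilpotent_lie :: "(('n \<Rightarrow> 'k::field) \<Rightarrow> ('n \<Rightarrow> 'k) \<Rightarrow> ('n \<Rightarrow> 'k)) \<Rightarrow> bool" where
  "nilpotent_lie B \<longleftrightarrow> (\<exists>m. \<forall>xs y. length xs = m \<longrightarrow> foldr B xs y = (\<lambda>i. 0))"

definition is_eigenvalue :: "(('n \<Rightarrow> 'k::field) \<Rightarrow> ('n \<Rightarrow> 'k)) \<Rightarrow> 'k \<Rightarrow> bool" where
  "is_eigenvalue f \<mu> \<longleftrightarrow> (\<exists>v. v \<noteq> (\<lambda>i. 0) \<and> f v = (\<lambda>i. \<mu> * v i))"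

end

theory Submission
  imports Defs "HOL-Analysis.Analysis"
begin

(* Choose e with \<alpha>(L(e)) \<noteq> 0.  Since L(e) has the single eigenvalue
   \<alpha>(L(e)) \<noteq> 0, zero is not an eigenvalue, so the linear map L(e) is injective and,
   A being finite-dimensional, bijective.  Take a with e\<cdot>a = e and z with e\<cdot>z = a.
   Right-commutativity (x\<cdot>y)\<cdot>z = (x\<cdot>z)\<cdot>y of LR-algebras then gives
     a\<cdot>a = (e\<cdot>z)\<cdot>a = (e\<cdot>a)\<cdot>z = e\<cdot>z = a,
   and a \<noteq> 0 because e \<noteq> 0. *)

lemma klinear_add:
  assumes "klinear f"
  shows "f (\<lambda>i. u i + v i) = (\<lambda>j. f u j + f v j)"
  using assms unfolding klinear_def by blast

lemma klinear_scale:
  assumes "klinear f"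
  shows "f (\<lambda>i. c * u i) = (\<lambda>j. c * f u j)"
  using assms unfolding klinear_def by blast

lemma klinear_zero:
  assumes "klinear f"
  shows "f (\<lambda>i. 0) = (\<lambda>j. 0)"
  using klinear_scale[OF assms, of 0 "\<lambda>i. 0"] by simp

lemma klinear_diff:
  assumes "klinear f"
  shows "f (\<lambda>i. u i - v i) = (\<lambda>j. f u j - f v j)"
proof -
  have "f (\<lambda>i. u i - v i) = f (\<lambda>i. u i + (\<lambda>i. (-1) * v i) i)" by simp
  also have "\<dots> = (\<lambda>j. f u j + f (\<lambda>i. (-1) * v i) j)" by (rule klinear_add[OF assms])
  also have "\<dots> = (\<lambda>j. f u j - f v j)" using klinear_scale[OF assms, of "-1" v] by simp
  finally show ?thesis .
qed

lemma klinear_inj_if_no_zero_eigenvalue: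
  assumes lin: "klinear f" and no_zero: "\<not> is_eigenvalue f 0"
  shows "inj f"
proof (rule injI)
  fix u v assume uv: "f u = f v"
  have "f (\<lambda>i. u i - v i) = (\<lambda>j. 0 * (u j - v j))"
    using klinear_diff[OF lin, of u v] uv by simp
  with no_zero have "(\<lambda>i. u i - v i) = (\<lambda>i. 0)"
    unfolding is_eigenvalue_def by blast
  then show "u = v" by (auto simp: fun_eq_iff dest: fun_cong)
qed

text \<open>Finite-dimensionality: an injective linear endomorphism of k^n is surjective.
  This is transferred from the library result on the vector type \<open>'k^'n\<close>.\<close>
lemma klinear_inj_imp_surj:
  fixes f :: "('n::finite \<Rightarrow> 'k::field) \<Rightarrow> ('n \<Rightarrow> 'k)"
  assumes lin: "klinear f" and inj: "inj f"
  shows "surj f"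
proof -
  define g where "g = (\<lambda>v::'k^'n. vec_lambda (f (vec_nth v)))"
  have "Vector_Spaces.linear (*s) (*s) g"
  proof (unfold_locales)
    fix x y :: "'k^'n"
    have "vec_nth (x + y) = (\<lambda>i. x$i + y$i)" by (auto simp: vector_add_component)
    then show "g (x + y) = g x + g y"
      unfolding g_def by (simp add: klinear_add[OF lin] vec_eq_iff)
  next
    fix c and x :: "'k^'n"
    have "vec_nth (c *s x) = (\<lambda>i. c * x$i)" by auto
    then show "g (c *s x) = c *s g x"
      unfolding g_def by (simp add: klinear_scale[OF lin] vec_eq_iff)
  qed
  moreover have "inj g"
    unfolding g_def inj_def
    by (metis inj injD vec_lambda_inverse UNIV_I vec_nth_inject)
  ultimately have surj_g: "surj g" by (rule vec.linear_inj_imp_surj)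
  show ?thesis unfolding surj_def
  proof
    fix y
    obtain x where "g x = vec_lambda y" using surj_g by (metis surjD)
    then have "f (vec_nth x) = y" unfolding g_def by (simp add: vec_lambda_inject)
    then show "\<exists>x. y = f x" by blast
  qed
qed

lemma idempotent_from_surjective_left_mult:
  assumes right_comm: "\<And>x y z. P (P x y) z = P (P x z) y"
    and lin: "klinear (P e)" and surj: "surj (P e)" and e_nonzero: "e \<noteq> (\<lambda>i. 0)"
  shows "\<exists>a. a \<noteq> (\<lambda>i. 0) \<and> P a a = a"
proof -
  obtain a where a: "P e a = e" using surj by (metis surjD)
  obtain z where z: "P e z = a" using surj by (metis surjD)
  have "a \<noteq> (\<lambda>i. 0)" using a e_nonzero klinear_zero[OF lin] by auto
  moreover have "P a a = a"
  proof -
    have "P a a = P (P e z) a" using z by simp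
    also have "\<dots> = P (P e a) z" by (rule right_comm)
    also have "\<dots> = a" using a z by simp
    finally show ?thesis .
  qed
  ultimately show ?thesis by blast
qed

text \<open>A homogeneous weight vanishes on L(0); so an element of nonzero weight is nonzero.\<close>
lemma nonzero_if_weight_nonzero:
  assumes scale: "\<forall>c x. \<alpha> (P (\<lambda>i. c * x i)) = (c::'k::field) * \<alpha> (P x)"
    and weight: "\<alpha> (P e) \<noteq> 0"
  shows "e \<noteq> (\<lambda>i. 0)"
proof
  assume "e = (\<lambda>i. 0)"
  then have "e = (\<lambda>i. 0 * e i)" by simp
  then have "\<alpha> (P e) = 0 * \<alpha> (P e)" using scale by metis
  with weight show False by simp
qed

theorem lemma2p4:
  fixes P :: "('n::finite \<Rightarrow> 'k::{alg_closed_field, field_char_0}) \<Rightarrow> ('n \<Rightarrow> 'k) \<Rightarrow> ('n \<Rightarrow> 'k)"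
    and \<alpha> :: "(('n \<Rightarrow> 'k) \<Rightarrow> ('n \<Rightarrow> 'k)) \<Rightarrow> 'k"
  assumes LR: "LR_algebra P"
    and nilp: "nilpotent_lie (commutator P)"
    and alpha_add: "\<forall>x y. \<alpha> (P (\<lambda>i. x i + y i)) = \<alpha> (P x) + \<alpha> (P y)"
    and alpha_scale: "\<forall>c x. \<alpha> (P (\<lambda>i. c * x i)) = c * \<alpha> (P x)"
    and single_weight: "\<forall>x \<mu>. is_eigenvalue (P x) \<mu> \<longleftrightarrow> \<mu> = \<alpha> (P x)"
    and alpha_nonzero: "\<exists>x. \<alpha> (P x) \<noteq> 0"
  shows "\<exists>a. a \<noteq> (\<lambda>i. 0) \<and> P a a = a"
proof -
  obtain e where e: "\<alpha> (P e) \<noteq> 0" using alpha_nonzero by blast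
  have lin: "klinear (P e)" using LR unfolding LR_algebra_def bilinear_prod_def by blast
  have right_comm: "\<And>x y z. P (P x y) z = P (P x z) y"
    using LR unfolding LR_algebra_def by blast
  have "\<not> is_eigenvalue (P e) 0" using single_weight e by metis
  then have "inj (P e)" by (rule klinear_inj_if_no_zero_eigenvalue[OF lin])
  then have "surj (P e)" by (rule klinear_inj_imp_surj[OF lin])
  moreover have "e \<noteq> (\<lambda>i. 0)" by (rule nonzero_if_weight_nonzero[OF alpha_scale e])
  ultimately show ?thesis by (rule idempotent_from_surjective_left_mult[OF right_comm lin])
qed

end
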